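(* Let $c>0$, $\alpha>0$ (constant step size), $\zeta\in(0,1)$, and let $M\ge 1$ be an integer number of workers. Consider minimizing $f(w)=\frac12 c w^2$ over $w\in\mathbb{R}$ using noisy gradient samples of the form $\nabla\tilde f(w)=cw-\tilde b w-\tilde h$, where $\tilde b$ and $\tilde h$ are independent random variables with mean $0$ and variances $\beta^2$ and $\sigma^2$ respectively, drawn freshly and independently for every worker and every time step. The $M$ workers start from a common initial point, and the models $w_{1,t},\dots,w_{M,t}$ evolve as follows: at each time step $t$, independently of everything else, with probability $\zeta$ all models are averaged, i.e. $w_{i,t+1}=\frac1M\sum_{j=1}^M w_{j,t}$ for every $i$; otherwise (with probability $1-\zeta$) each worker independently performs the constant-step SGD update $w_{i,t+1}=w_{i,t}-\alpha\nabla\tilde f(w_{i,t})=(1-\alpha c)w_{i,t}+\alpha(\tilde b_{i,t}w_{i,t}+\tilde h_{i,t})$. Then the asymptotic variance of the average of the models is \[ \lim_{t\to\infty}\mathbf{Var}\left(\frac1M\sum_{i=1}^M w_{i,t}\right)=\frac{\alpha\sigma^2}{M}\left(2c-\alpha c^2-\alpha\beta^2\,\frac{1+\eta M^{-1}}{1+\eta}\right)^{-1}, \qquad\text{where } \eta=\frac{\zeta}{(1-\zeta)\,\alpha\,(2c-\alpha c^2)}. \]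
   Context: This is a simple one-dimensional model of parallel SGD with periodic (randomized) model averaging: the expected number of steps between averaging operations is $\zeta^{-1}$. The noise model satisfies the gradient-variance bound $\mathbf{Var}(\nabla\tilde f(w))\le \beta^2 w^2+\sigma^2$, i.e. the variance grows with the distance from the optimum $w^*=0$.
   Formalization: The limit formula is asserted only when alpha c < 2 and the bracket $2c-\alpha c^2-\alpha\beta^2\,\frac{1+\eta M^{-1}}{1+\eta}$ is positive. The statement above fails without it. *)

theory Defs
  imports "HOL-Probability.Probability"
begin

text \<open>Sources of randomness: the averaging coin at time t, and the noise
  variables b_{i,t}, h_{i,t} of worker i at time t.\<close>
datatype src = Coin nat | Bn nat nat | Hn nat nat

definition var :: "'a measure \<Rightarrow> ('a \<Rightarrow> real) \<Rightarrow> real" where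
  "var P Y = integral\<^sup>L P (\<lambda>x. (Y x - integral\<^sup>L P Y)\<^sup>2)"

fun W :: "nat \<Rightarrow> real \<Rightarrow> real \<Rightarrow> real \<Rightarrow> (src \<Rightarrow> 'a \<Rightarrow> real) \<Rightarrow> 'a \<Rightarrow> nat \<Rightarrow> nat \<Rightarrow> real" where
  "W M c \<alpha> w0 X \<omega> 0 = (\<lambda>i. w0)"
| "W M c \<alpha> w0 X \<omega> (Suc t) =
     (let w = W M c \<alpha> w0 X \<omega> t in
      if X (Coin t) \<omega> = 1 then (\<lambda>i. (\<Sum>j<M. w j) / real M)
      else (\<lambda>i. w i - \<alpha> * (c * w i - X (Bn i t) \<omega> * w i - X (Hn i t) \<omega>)))"

definition eta :: "real \<Rightarrow> real \<Rightarrow> real \<Rightarrow> real" where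
  "eta \<zeta> \<alpha> c = \<zeta> / ((1 - \<zeta>) * \<alpha> * (2 * c - \<alpha> * c\<^sup>2))"

definition denom :: "nat \<Rightarrow> real \<Rightarrow> real \<Rightarrow> real \<Rightarrow> real \<Rightarrow> real" where
  "denom M \<zeta> \<alpha> c \<beta> = 2 * c - \<alpha> * c\<^sup>2 - \<alpha> * \<beta>\<^sup>2 * (1 + eta \<zeta> \<alpha> c / real M) / (1 + eta \<zeta> \<alpha> c)"

end

theory Submission
  imports Defs
begin

text \<open>The fresh noise and the averaging coin of step t are independent of everything the models
  depend on at time t. Hence all workers share the same mean m_t, the same second moment
  A_t = E w_{i,t}^2 and the same cross moment B_t = E w_{i,t} w_{j,t} (i \<noteq> j), and these obey a
  closed recursion: m_{t+1} = (\<zeta> + (1 - \<zeta>)(1 - \<alpha>c)) m_t, while (A, B) follows a nonnegative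
  affine recursion, mixing the second moment (A + (M - 1) B)/M of the average (averaging step) with
  the SGD step A \<mapsto> ((1 - \<alpha>c)^2 + \<alpha>^2\<beta>^2) A + \<alpha>^2\<sigma>^2, B \<mapsto> (1 - \<alpha>c)^2 B. The determinant of
  I minus its matrix is a positive multiple of the denominator of the claimed limit, so (A_t, B_t)
  converges to the fixed point, m_t tends to 0, and the variance of the average,
  (A_t + (M - 1) B_t)/M - m_t^2, converges to the stated value.\<close>

definition depends_on :: "'a measure \<Rightarrow> ('i \<Rightarrow> 'a \<Rightarrow> real) \<Rightarrow> 'i set \<Rightarrow> ('a \<Rightarrow> real) \<Rightarrow> bool" where
  "depends_on P X K g \<longleftrightarrow>
     (\<exists>G \<in> borel_measurable (\<Pi>\<^sub>M i\<in>K. borel). \<forall>\<omega>\<in>space P. g \<omega> = G (restrict (\<lambda>i. X i \<omega>) K))"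

lemma depends_on_component: "i \<in> K \<Longrightarrow> depends_on P X K (X i)"
  unfolding depends_on_def by (intro bexI[of _ "\<lambda>x. x i"]) auto

lemma depends_on_const: "depends_on P X K (\<lambda>_. a)"
  unfolding depends_on_def by (intro bexI[of _ "\<lambda>_. a"]) auto

lemma depends_on_compose:
  assumes "depends_on P X K g" and "f \<in> borel_measurable borel"
  shows "depends_on P X K (\<lambda>\<omega>. f (g \<omega>))"
proof -
  obtain G where "G \<in> borel_measurable (\<Pi>\<^sub>M i\<in>K. borel)" "\<forall>\<omega>\<in>space P. g \<omega> = G (restrict (\<lambda>i. X i \<omega>) K)"
    using assms(1) unfolding depends_on_def by blast
  moreover from this(1) have "(\<lambda>x. f (G x)) \<in> borel_measurable (\<Pi>\<^sub>M i\<in>K. borel)"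
    using measurable_compose assms(2) by blast
  ultimately show ?thesis
    unfolding depends_on_def by (intro bexI[of _ "\<lambda>x. f (G x)"]) auto
qed

lemma depends_on_binop:
  assumes "depends_on P X K g" "depends_on P X K h"
    and f: "\<And>G H. G \<in> borel_measurable (\<Pi>\<^sub>M i\<in>K. (borel :: real measure)) \<Longrightarrow>
              H \<in> borel_measurable (\<Pi>\<^sub>M i\<in>K. (borel :: real measure)) \<Longrightarrow>
              (\<lambda>x. f (G x) (H x)) \<in> borel_measurable (\<Pi>\<^sub>M i\<in>K. (borel :: real measure))"
  shows "depends_on P X K (\<lambda>\<omega>. f (g \<omega>) (h \<omega>))"
proof -
  obtain G H where "G \<in> borel_measurable (\<Pi>\<^sub>M i\<in>K. borel)" "\<forall>\<omega>\<in>space P. g \<omega> = G (restrict (\<lambda>i. X i \<omega>) K)"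
    and "H \<in> borel_measurable (\<Pi>\<^sub>M i\<in>K. borel)" "\<forall>\<omega>\<in>space P. h \<omega> = H (restrict (\<lambda>i. X i \<omega>) K)"
    using assms(1,2) unfolding depends_on_def by blast
  with f show ?thesis
    unfolding depends_on_def by (intro bexI[of _ "\<lambda>x. f (G x) (H x)"]) auto
qed

lemma depends_on_add: "depends_on P X K g \<Longrightarrow> depends_on P X K h \<Longrightarrow> depends_on P X K (\<lambda>\<omega>. g \<omega> + h \<omega>)"
  by (rule depends_on_binop[where f="(+)"]) (auto intro: borel_measurable_add)

lemma depends_on_diff: "depends_on P X K g \<Longrightarrow> depends_on P X K h \<Longrightarrow> depends_on P X K (\<lambda>\<omega>. g \<omega> - h \<omega>)"
  by (rule depends_on_binop[where f="(-)"]) (auto intro: borel_measurable_diff)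

lemma depends_on_mult: "depends_on P X K g \<Longrightarrow> depends_on P X K h \<Longrightarrow> depends_on P X K (\<lambda>\<omega>. g \<omega> * h \<omega>)"
  by (rule depends_on_binop[where f="(*)"]) (auto intro: borel_measurable_times)

lemma depends_on_sum:
  "finite A \<Longrightarrow> (\<And>j. j \<in> A \<Longrightarrow> depends_on P X K (g j)) \<Longrightarrow> depends_on P X K (\<lambda>\<omega>. \<Sum>j\<in>A. g j \<omega>)"
  by (induction A rule: finite_induct) (auto intro: depends_on_add depends_on_const)

lemma depends_on_mono:
  assumes "K \<subseteq> L" and "depends_on P X K g"
  shows "depends_on P X L g"
proof -
  obtain G where G: "G \<in> borel_measurable (\<Pi>\<^sub>M i\<in>K. borel)" "\<forall>\<omega>\<in>space P. g \<omega> = G (restrict (\<lambda>i. X i \<omega>) K)"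
    using assms(2) unfolding depends_on_def by blast
  have "(\<lambda>x. G (restrict x K)) \<in> borel_measurable (\<Pi>\<^sub>M i\<in>L. borel)"
    using measurable_compose[OF measurable_restrict_subset[OF assms(1)] G(1)] by simp
  moreover have "restrict (restrict (\<lambda>i. X i \<omega>) L) K = restrict (\<lambda>i. X i \<omega>) K" for \<omega>
    using assms(1) by (auto simp: fun_eq_iff)
  ultimately show ?thesis
    using G(2) unfolding depends_on_def by (intro bexI[of _ "\<lambda>x. G (restrict x K)"]) auto
qed

lemma (in prob_space) depends_on_disjoint_integral_mult:
  assumes indep: "indep_vars (\<lambda>_. borel) X I" and K: "K \<subseteq> I" "L \<subseteq> I" "K \<inter> L = {}"
    and g: "depends_on M X K g" "integrable M g" and h: "depends_on M X L h" "integrable M h"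
  shows "integrable M (\<lambda>\<omega>. g \<omega> * h \<omega>) \<and> expectation (\<lambda>\<omega>. g \<omega> * h \<omega>) = expectation g * expectation h"
proof -
  obtain G where G: "G \<in> borel_measurable (\<Pi>\<^sub>M i\<in>K. borel)"
    and g_eq: "\<And>\<omega>. \<omega> \<in> space M \<Longrightarrow> g \<omega> = G (restrict (\<lambda>i. X i \<omega>) K)"
    using g(1) unfolding depends_on_def by blast
  obtain H where H: "H \<in> borel_measurable (\<Pi>\<^sub>M i\<in>L. borel)"
    and h_eq: "\<And>\<omega>. \<omega> \<in> space M \<Longrightarrow> h \<omega> = H (restrict (\<lambda>i. X i \<omega>) L)"
    using h(1) unfolding depends_on_def by blast
  \<comment> \<open>indep_var is indep_vars over bool; naming the two families lets them be rewritten to case_bool.\<close>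
  define KL where "KL = case_bool K L"
  define Q where "Q b = (\<Pi>\<^sub>M i\<in>KL b. (borel :: real measure))" for b
  define R where "R b \<omega> = restrict (\<lambda>i. X i \<omega>) (KL b)" for b \<omega>
  have "indep_vars Q R UNIV"
    unfolding Q_def R_def
    by (rule indep_vars_restrict[OF indep]) (use K in \<open>auto simp: KL_def disjoint_family_on_def split: bool.split\<close>)
  moreover have "Q = case_bool (\<Pi>\<^sub>M i\<in>K. borel) (\<Pi>\<^sub>M i\<in>L. borel)"
    and "R = case_bool (\<lambda>\<omega>. restrict (\<lambda>i. X i \<omega>) K) (\<lambda>\<omega>. restrict (\<lambda>i. X i \<omega>) L)"
    by (auto simp: KL_def Q_def R_def fun_eq_iff split: bool.split)
  ultimately have "indep_var (\<Pi>\<^sub>M i\<in>K. borel) (\<lambda>\<omega>. restrict (\<lambda>i. X i \<omega>) K) (\<Pi>\<^sub>M i\<in>L. borel) (\<lambda>\<omega>. restrict (\<lambda>i. X i \<omega>) L)"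
    unfolding indep_var_def by simp
  from indep_var_compose[OF this G H]
  have GH: "indep_var borel (\<lambda>\<omega>. G (restrict (\<lambda>i. X i \<omega>) K)) borel (\<lambda>\<omega>. H (restrict (\<lambda>i. X i \<omega>) L))"
    by (simp add: comp_def)
  have "integrable M (\<lambda>\<omega>. G (restrict (\<lambda>i. X i \<omega>) K))" "integrable M (\<lambda>\<omega>. H (restrict (\<lambda>i. X i \<omega>) L))"
    using g(2) h(2) g_eq h_eq by (simp_all cong: Bochner_Integration.integrable_cong)
  from indep_var_integrable[OF GH this] indep_var_lebesgue_integral[OF GH this] show ?thesis
    using g_eq h_eq by (simp cong: Bochner_Integration.integrable_cong Bochner_Integration.integral_cong)
qed

lemma (in prob_space) var_eq_second_moment:
  assumes "integrable M Y" "integrable M (\<lambda>\<omega>. Y \<omega> * Y \<omega>)"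
  shows "var M Y = expectation (\<lambda>\<omega>. Y \<omega> * Y \<omega>) - (expectation Y)\<^sup>2"
proof -
  define m where "m = expectation Y"
  have "(\<lambda>\<omega>. (Y \<omega> - m)\<^sup>2) = (\<lambda>\<omega>. Y \<omega> * Y \<omega> - (2 * m * Y \<omega> - m\<^sup>2))"
    by (simp add: fun_eq_iff power2_eq_square algebra_simps)
  then have "var M Y = expectation (\<lambda>\<omega>. Y \<omega> * Y \<omega> - (2 * m * Y \<omega> - m\<^sup>2))"
    by (simp add: var_def m_def)
  also have "\<dots> = expectation (\<lambda>\<omega>. Y \<omega> * Y \<omega>) - (2 * m * m - m\<^sup>2)"
    using assms by (simp add: m_def prob_space)
  finally show ?thesis by (simp add: m_def power2_eq_square)
qed

definition symmetric_moments :: "'a measure \<Rightarrow> nat \<Rightarrow> (nat \<Rightarrow> 'a \<Rightarrow> real) \<Rightarrow> real \<Rightarrow> real \<Rightarrow> real \<Rightarrow> bool" where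
  "symmetric_moments P n Y m A B \<longleftrightarrow>
     (\<forall>i<n. integrable P (Y i) \<and> integral\<^sup>L P (Y i) = m) \<and>
     (\<forall>i<n. \<forall>j<n. integrable P (\<lambda>\<omega>. Y i \<omega> * Y j \<omega>) \<and>
        integral\<^sup>L P (\<lambda>\<omega>. Y i \<omega> * Y j \<omega>) = (if i = j then A else B))"

lemma sum_diagonal_if:
  fixes A B :: real
  assumes "i < n"
  shows "(\<Sum>j<n. if i = j then A else B) = A + (real n - 1) * B"
proof -
  have "(\<Sum>j<n. if i = j then A else B) = (\<Sum>j<n. B + (if i = j then A - B else 0))"
    by (rule sum.cong) auto
  also have "\<dots> = real n * B + (A - B)"
    using assms by (simp add: sum.distrib)
  finally show ?thesis by (simp add: algebra_simps)
qed

lemma (in prob_space) symmetric_moments_average: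
  assumes Y: "symmetric_moments M n Y m A B" and "n > 0"
  defines "Yavg \<equiv> \<lambda>\<omega>. (\<Sum>i<n. Y i \<omega>) / real n"
  shows "integrable M Yavg" "expectation Yavg = m"
    and "integrable M (\<lambda>\<omega>. Yavg \<omega> * Yavg \<omega>)"
    and "expectation (\<lambda>\<omega>. Yavg \<omega> * Yavg \<omega>) = (A + (real n - 1) * B) / real n"
proof -
  have Y1: "integrable M (Y i)" "expectation (Y i) = m" if "i < n" for i
    using Y that unfolding symmetric_moments_def by auto
  have Y2: "integrable M (\<lambda>\<omega>. Y i \<omega> * Y j \<omega>)"
    "expectation (\<lambda>\<omega>. Y i \<omega> * Y j \<omega>) = (if i = j then A else B)" if "i < n" "j < n" for i j
    using Y that unfolding symmetric_moments_def by auto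
  have square: "Yavg \<omega> * Yavg \<omega> = (\<Sum>i<n. \<Sum>j<n. Y i \<omega> * Y j \<omega>) / (real n * real n)" for \<omega>
    by (simp add: Yavg_def sum_product)
  have sum_int: "integrable M (\<lambda>\<omega>. \<Sum>i<n. Y i \<omega>)"
    by (intro Bochner_Integration.integrable_sum Y1) auto
  then show "integrable M Yavg"
    unfolding Yavg_def by simp
  have "expectation (\<lambda>\<omega>. \<Sum>i<n. Y i \<omega>) = (\<Sum>i<n. m)"
    by (subst Bochner_Integration.integral_sum) (auto simp: Y1)
  then show "expectation Yavg = m"
    using \<open>n > 0\<close> by (simp add: Yavg_def)
  show "integrable M (\<lambda>\<omega>. Yavg \<omega> * Yavg \<omega>)"
    unfolding square by (intro integrable_divide_zero Bochner_Integration.integrable_sum Y2) auto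
  have "expectation (\<lambda>\<omega>. \<Sum>i<n. \<Sum>j<n. Y i \<omega> * Y j \<omega>) = (\<Sum>i<n. \<Sum>j<n. if i = j then A else B)"
  proof -
    have "expectation (\<lambda>\<omega>. \<Sum>j<n. Y i \<omega> * Y j \<omega>) = (\<Sum>j<n. if i = j then A else B)" if "i < n" for i
      using that by (subst Bochner_Integration.integral_sum) (auto simp: Y2)
    moreover have "integrable M (\<lambda>\<omega>. \<Sum>j<n. Y i \<omega> * Y j \<omega>)" if "i < n" for i
      using that by (intro Bochner_Integration.integrable_sum Y2) auto
    ultimately show ?thesis
      by (subst Bochner_Integration.integral_sum) auto
  qed
  then have "expectation (\<lambda>\<omega>. Yavg \<omega> * Yavg \<omega>) = (\<Sum>i<n. \<Sum>j<n. if i = j then A else B) / (real n * real n)"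
    unfolding square by simp
  also have "\<dots> = (A + (real n - 1) * B) / real n"
    using \<open>n > 0\<close> by (simp add: sum_diagonal_if)
  finally show "expectation (\<lambda>\<omega>. Yavg \<omega> * Yavg \<omega>) = (A + (real n - 1) * B) / real n" .
qed

lemma nonneg_linear_recurrence2_tendsto_zero:
  fixes x y :: "nat \<Rightarrow> real"
  assumes nonneg: "a \<ge> 0" "b \<ge> 0" "c \<ge> 0" "d \<ge> 0" and "d < 1"
    and det: "(1 - a) * (1 - d) - b * c > 0"
    and x: "\<And>t. x (Suc t) = a * x t + b * y t"
    and y: "\<And>t. y (Suc t) = c * x t + d * y t"
  shows "x \<longlonglongrightarrow> 0" "y \<longlonglongrightarrow> 0"
proof -
  define D where "D = (1 - a) * (1 - d) - b * c"
  have "a < 1"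
  proof (rule ccontr)
    assume "\<not> a < 1"
    then have "(1 - a) * (1 - d) \<le> 0" using \<open>d < 1\<close> by (simp add: mult_nonpos_nonneg)
    with det nonneg show False by (smt (verit) zero_le_mult_iff)
  qed
  \<comment> \<open>(1 - d + c, 1 - a + b) (I - T) = (D, D) for the matrix T of the recurrence, so this weighted
      l1 norm drops by D (|x t| + |y t|) in every step.\<close>
  define V where "V t = (1 - d + c) * \<bar>x t\<bar> + (1 - a + b) * \<bar>y t\<bar>" for t
  have decrease: "V (Suc t) \<le> V t - D * (\<bar>x t\<bar> + \<bar>y t\<bar>)" for t
  proof -
    have "\<bar>x (Suc t)\<bar> \<le> a * \<bar>x t\<bar> + b * \<bar>y t\<bar>" "\<bar>y (Suc t)\<bar> \<le> c * \<bar>x t\<bar> + d * \<bar>y t\<bar>"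
      unfolding x y using nonneg by (metis abs_mult abs_of_nonneg abs_triangle_ineq)+
    then have "V (Suc t) \<le> (1 - d + c) * (a * \<bar>x t\<bar> + b * \<bar>y t\<bar>) + (1 - a + b) * (c * \<bar>x t\<bar> + d * \<bar>y t\<bar>)"
      unfolding V_def using nonneg \<open>a < 1\<close> \<open>d < 1\<close> by (intro add_mono mult_left_mono) auto
    also have "\<dots> = V t - D * (\<bar>x t\<bar> + \<bar>y t\<bar>)"
      unfolding V_def D_def by (simp add: algebra_simps)
    finally show ?thesis .
  qed
  have V_nonneg: "V t \<ge> 0" for t
    unfolding V_def using nonneg \<open>a < 1\<close> \<open>d < 1\<close> by simp
  have partial_sums: "D * (\<Sum>s<n. \<bar>x s\<bar> + \<bar>y s\<bar>) \<le> V 0 - V n" for n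
  proof (induction n)
    case (Suc n)
    then show ?case using decrease[of n] by (simp add: algebra_simps)
  qed simp
  have "summable (\<lambda>s. \<bar>x s\<bar> + \<bar>y s\<bar>)"
  proof (rule summableI_nonneg_bounded)
    show "(\<Sum>s<n. \<bar>x s\<bar> + \<bar>y s\<bar>) \<le> V 0 / D" for n
      using partial_sums[of n] V_nonneg[of n] det by (simp add: D_def field_simps)
  qed auto
  then have norm_to_0: "(\<lambda>s. \<bar>x s\<bar> + \<bar>y s\<bar>) \<longlonglongrightarrow> 0"
    by (rule summable_LIMSEQ_zero)
  show "x \<longlonglongrightarrow> 0" "y \<longlonglongrightarrow> 0"
    by (rule tendsto_sandwich[of "\<lambda>s. - (\<bar>x s\<bar> + \<bar>y s\<bar>)" _ _ "\<lambda>s. \<bar>x s\<bar> + \<bar>y s\<bar>"],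
        auto intro!: always_eventually norm_to_0 tendsto_minus[OF norm_to_0, simplified])+
qed

lemma nonneg_affine_recurrence2_tendsto:
  fixes x y :: "nat \<Rightarrow> real"
  assumes nonneg: "a \<ge> 0" "b \<ge> 0" "c \<ge> 0" "d \<ge> 0" and "d < 1"
    and det: "(1 - a) * (1 - d) - b * c > 0"
    and x: "\<And>t. x (Suc t) = a * x t + b * y t + e"
    and y: "\<And>t. y (Suc t) = c * x t + d * y t + f"
  defines "D \<equiv> (1 - a) * (1 - d) - b * c"
  shows "x \<longlonglongrightarrow> ((1 - d) * e + b * f) / D" "y \<longlonglongrightarrow> (c * e + (1 - a) * f) / D"
proof -
  define x\<^sub>0 y\<^sub>0 where "x\<^sub>0 = ((1 - d) * e + b * f) / D" and "y\<^sub>0 = (c * e + (1 - a) * f) / D"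
  have "D \<noteq> 0"
    using det by (simp add: D_def)
  have "(1 - a) * x\<^sub>0 - b * y\<^sub>0 = ((1 - a) * ((1 - d) * e + b * f) - b * (c * e + (1 - a) * f)) / D"
    by (simp add: x\<^sub>0_def y\<^sub>0_def diff_divide_distrib)
  also have "\<dots> = D * e / D"
    by (simp add: D_def algebra_simps)
  finally have "x\<^sub>0 = a * x\<^sub>0 + b * y\<^sub>0 + e"
    using \<open>D \<noteq> 0\<close> by (simp add: algebra_simps)
  have "(1 - d) * y\<^sub>0 - c * x\<^sub>0 = ((1 - d) * (c * e + (1 - a) * f) - c * ((1 - d) * e + b * f)) / D"
    by (simp add: x\<^sub>0_def y\<^sub>0_def diff_divide_distrib)
  also have "\<dots> = D * f / D"
    by (simp add: D_def algebra_simps)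
  finally have "y\<^sub>0 = c * x\<^sub>0 + d * y\<^sub>0 + f"
    using \<open>D \<noteq> 0\<close> by (simp add: algebra_simps)
  note fixed_point = \<open>x\<^sub>0 = a * x\<^sub>0 + b * y\<^sub>0 + e\<close> this
  have "x (Suc t) - x\<^sub>0 = a * (x t - x\<^sub>0) + b * (y t - y\<^sub>0)"
    and "y (Suc t) - y\<^sub>0 = c * (x t - x\<^sub>0) + d * (y t - y\<^sub>0)" for t
    unfolding x y using fixed_point by (simp_all only: right_diff_distrib)
  from nonneg_linear_recurrence2_tendsto_zero[where x="\<lambda>t. x t - x\<^sub>0" and y="\<lambda>t. y t - y\<^sub>0", OF nonneg \<open>d < 1\<close> det this]
  show "x \<longlonglongrightarrow> x\<^sub>0" "y \<longlonglongrightarrow> y\<^sub>0"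
    by (auto dest: LIM_zero_cancel)
qed

lemma abs_averaged_contraction_less_one:
  fixes \<alpha> c \<zeta> :: real
  assumes "0 < \<zeta>" "\<zeta> < 1" "0 < \<alpha> * c" "\<alpha> * c < 2"
  shows "\<bar>\<zeta> + (1 - \<zeta>) * (1 - \<alpha> * c)\<bar> < 1"
proof -
  have "(1 - \<zeta>) * (1 - \<alpha> * c) < 1 - \<zeta>"
    using mult_strict_left_mono[of "1 - \<alpha> * c" 1 "1 - \<zeta>"] assms by simp
  moreover have "- (1 - \<zeta>) < (1 - \<zeta>) * (1 - \<alpha> * c)"
    using mult_strict_left_mono[of "-1" "1 - \<alpha> * c" "1 - \<zeta>"] assms by simp
  ultimately show ?thesis
    unfolding abs_less_iff using \<open>0 < \<zeta>\<close> by linarith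
qed

lemma alpha_denom_eq:
  fixes c \<alpha> \<zeta> \<beta> :: real and M :: nat
  assumes "c > 0" "\<alpha> > 0" "0 < \<zeta>" "\<zeta> < 1" "\<alpha> * c < 2" "M \<ge> 1"
  defines "\<delta> \<equiv> \<alpha> * (2 * c - \<alpha> * c\<^sup>2)"
  shows "\<alpha> * denom M \<zeta> \<alpha> c \<beta> * ((1 - \<zeta>) * \<delta> + \<zeta>)
           = \<delta> * ((1 - \<zeta>) * \<delta> + \<zeta>) - \<alpha>\<^sup>2 * \<beta>\<^sup>2 * ((1 - \<zeta>) * \<delta> + \<zeta> / real M)"
proof -
  define x where "x = (1 - \<zeta>) * \<delta>"
  have "\<delta> > 0"
    using assms(1,2,5) by (simp add: \<delta>_def power2_eq_square algebra_simps mult_pos_pos)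
  then have "x > 0"
    using \<open>\<zeta> < 1\<close> by (simp add: x_def)
  have eta: "eta \<zeta> \<alpha> c = \<zeta> / x"
    by (simp add: eta_def x_def \<delta>_def mult.assoc)
  have "1 + eta \<zeta> \<alpha> c / real M = (x + \<zeta> / real M) / x" "1 + eta \<zeta> \<alpha> c = (x + \<zeta>) / x"
    using \<open>x > 0\<close> unfolding eta by (simp_all add: field_simps)
  then have ratio: "(1 + eta \<zeta> \<alpha> c / real M) / (1 + eta \<zeta> \<alpha> c) = (x + \<zeta> / real M) / (x + \<zeta>)"
    using \<open>x > 0\<close> by simp
  have "\<alpha> * denom M \<zeta> \<alpha> c \<beta> = \<delta> - \<alpha>\<^sup>2 * \<beta>\<^sup>2 * ((1 + eta \<zeta> \<alpha> c / real M) / (1 + eta \<zeta> \<alpha> c))"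
    by (simp add: denom_def \<delta>_def power2_eq_square algebra_simps)
  also have "\<dots> = \<delta> - \<alpha>\<^sup>2 * \<beta>\<^sup>2 * (x + \<zeta> / real M) / (x + \<zeta>)"
    unfolding ratio by simp
  finally show ?thesis
    using \<open>x > 0\<close> \<open>\<zeta> > 0\<close> unfolding x_def[symmetric] by (simp add: left_diff_distrib)
qed

lemma average_second_moment_tendsto:
  fixes A B :: "nat \<Rightarrow> real" and c \<alpha> \<zeta> \<beta> \<sigma> :: real and M :: nat
  assumes "c > 0" "\<alpha> > 0" "0 < \<zeta>" "\<zeta> < 1" "\<alpha> * c < 2" "M \<ge> 1" and denom: "denom M \<zeta> \<alpha> c \<beta> > 0"
  defines "S \<equiv> \<lambda>t. (A t + (real M - 1) * B t) / real M"
  assumes A: "\<And>t. A (Suc t) = \<zeta> * S t + (1 - \<zeta>) * (((1 - \<alpha> * c)\<^sup>2 + \<alpha>\<^sup>2 * \<beta>\<^sup>2) * A t + \<alpha>\<^sup>2 * \<sigma>\<^sup>2)"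
    and B: "\<And>t. B (Suc t) = \<zeta> * S t + (1 - \<zeta>) * (1 - \<alpha> * c)\<^sup>2 * B t"
  shows "S \<longlonglongrightarrow> \<alpha> * \<sigma>\<^sup>2 / real M * inverse (denom M \<zeta> \<alpha> c \<beta>)"
proof -
  define u \<delta> k q where "u = 1 - \<zeta>" and "\<delta> = \<alpha> * (2 * c - \<alpha> * c\<^sup>2)"
    and "k = \<zeta> / real M" and "q = \<alpha>\<^sup>2 * \<beta>\<^sup>2"
  define w where "w = u * \<delta> + \<zeta>"
  have "real M > 0" "u > 0" "k > 0" "q \<ge> 0"
    using assms by (simp_all add: u_def k_def q_def)
  have "\<delta> > 0"
    using assms(1,2,5) by (simp add: \<delta>_def power2_eq_square algebra_simps mult_pos_pos)
  then have "u * \<delta> > 0"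
    using \<open>u > 0\<close> by simp
  then have "w > 0"
    using \<open>\<zeta> > 0\<close> by (simp add: w_def)
  have contraction: "(1 - \<alpha> * c)\<^sup>2 = 1 - \<delta>"
    by (simp add: \<delta>_def power2_eq_square algebra_simps)
  have stationary: "\<delta> * w - q * (u * \<delta> + k) = \<alpha> * denom M \<zeta> \<alpha> c \<beta> * w"
    using alpha_denom_eq[OF assms(1-6), of \<beta>] by (simp add: w_def u_def \<delta>_def k_def q_def)
  define a b d e where "a = k + u * (1 - \<delta> + q)" and "b = \<zeta> - k" and "d = \<zeta> - k + u * (1 - \<delta>)"
    and "e = u * \<alpha>\<^sup>2 * \<sigma>\<^sup>2"
  define L where "L = u * (\<alpha> * denom M \<zeta> \<alpha> c \<beta> * w)"
  have "A (Suc t) = a * A t + b * B t + e" "B (Suc t) = k * A t + d * B t + 0" for t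
    using \<open>real M > 0\<close> unfolding A B S_def contraction
    by (simp_all add: a_def b_def d_def e_def k_def q_def u_def field_simps)
  moreover have "k \<le> \<zeta>" "\<delta> \<le> 1"
    using \<open>M \<ge> 1\<close> \<open>\<zeta> > 0\<close> zero_le_power2[of "1 - \<alpha> * c"] unfolding contraction
    by (simp_all add: k_def field_simps)
  then have "u * (1 - \<delta> + q) \<ge> 0" "u * (1 - \<delta>) \<ge> 0"
    using \<open>u > 0\<close> \<open>q \<ge> 0\<close> by simp_all
  then have "a \<ge> 0" "b \<ge> 0" "d \<ge> 0" "d < 1"
    using \<open>k \<le> \<zeta>\<close> \<open>k > 0\<close> \<open>u * \<delta> > 0\<close>
    by (simp_all add: a_def b_def d_def u_def right_diff_distrib)
  \<comment> \<open>Stability of the recurrence is exactly the hypothesis denom > 0.\<close>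
  moreover have "(1 - a) * (1 - d) - b * k = L"
    unfolding L_def stationary[symmetric] by (simp add: a_def b_def d_def u_def w_def algebra_simps)
  moreover have "L > 0"
    unfolding L_def using \<open>u > 0\<close> \<open>\<alpha> > 0\<close> \<open>w > 0\<close> denom by simp
  ultimately have "A \<longlonglongrightarrow> (1 - d) * e / L" "B \<longlonglongrightarrow> k * e / L"
    using nonneg_affine_recurrence2_tendsto[of a b k d A B e 0] \<open>k > 0\<close> by simp_all
  then have lim: "S \<longlonglongrightarrow> ((1 - d) * e / L + (real M - 1) * (k * e / L)) / real M"
    using \<open>real M > 0\<close> unfolding S_def by (intro tendsto_intros) auto
  have "1 - d = w - (real M - 1) * k"
    using \<open>real M > 0\<close> by (simp add: w_def d_def k_def u_def field_simps)
  then have "((1 - d) * e / L + (real M - 1) * (k * e / L)) / real M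
      = \<alpha> * \<sigma>\<^sup>2 / real M * inverse (denom M \<zeta> \<alpha> c \<beta>)"
    using \<open>real M > 0\<close> \<open>u > 0\<close> \<open>\<alpha> > 0\<close> \<open>w > 0\<close> denom
    unfolding L_def by (simp only:) (simp add: e_def power2_eq_square field_simps)
  with lim show ?thesis
    by (simp only:)
qed

definition sources :: "nat \<Rightarrow> src set" where
  "sources M = {Coin t | t. True} \<union> {Bn i t | i t. i < M} \<union> {Hn i t | i t. i < M}"

definition past :: "nat \<Rightarrow> nat \<Rightarrow> src set" where
  "past M t = {Coin s | s. s < t} \<union> {Bn i s | i s. i < M \<and> s < t} \<union> {Hn i s | i s. i < M \<and> s < t}"

definition noise :: "nat \<Rightarrow> nat \<Rightarrow> src set" where
  "noise M t = {Bn i t | i. i < M} \<union> {Hn i t | i. i < M}"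

lemma past_Suc: "past M (Suc t) = past M t \<union> noise M t \<union> {Coin t}"
  unfolding past_def noise_def by (auto simp: less_Suc_eq)

lemma past_subset_sources: "past M t \<subseteq> sources M"
  unfolding past_def sources_def by blast

lemma noise_subset_sources: "noise M t \<subseteq> sources M"
  unfolding noise_def sources_def by blast

lemma past_noise_disjoint: "past M t \<inter> noise M t = {}"
  unfolding past_def noise_def by auto

lemma Coin_notin_past_noise: "Coin t \<notin> past M t \<union> noise M t"
  unfolding past_def noise_def by auto

locale local_sgd =
  fixes P :: "'a measure" and X :: "src \<Rightarrow> 'a \<Rightarrow> real" and c \<alpha> \<zeta> \<beta> \<sigma> w0 :: real and M :: nat
  assumes prob_space_P: "prob_space P" and workers: "M \<ge> 1"
    and indep: "prob_space.indep_vars P (\<lambda>_. borel) X (sources M)"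
    and coin: "\<And>t. measure P {\<omega> \<in> space P. X (Coin t) \<omega> = 1} = \<zeta>"
    and b: "\<And>i t. i < M \<Longrightarrow> integrable P (X (Bn i t)) \<and> integrable P (\<lambda>\<omega>. (X (Bn i t) \<omega>)\<^sup>2)
              \<and> integral\<^sup>L P (X (Bn i t)) = 0 \<and> var P (X (Bn i t)) = \<beta>\<^sup>2"
    and h: "\<And>i t. i < M \<Longrightarrow> integrable P (X (Hn i t)) \<and> integrable P (\<lambda>\<omega>. (X (Hn i t) \<omega>)\<^sup>2)
              \<and> integral\<^sup>L P (X (Hn i t)) = 0 \<and> var P (X (Hn i t)) = \<sigma>\<^sup>2"
begin

sublocale prob_space P
  by (rule prob_space_P)

definition model :: "nat \<Rightarrow> nat \<Rightarrow> 'a \<Rightarrow> real" where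
  "model t i = (\<lambda>\<omega>. W M c \<alpha> w0 X \<omega> t i)"

definition average :: "nat \<Rightarrow> 'a \<Rightarrow> real" where
  "average t = (\<lambda>\<omega>. (\<Sum>j<M. model t j \<omega>) / real M)"

definition averaging :: "nat \<Rightarrow> 'a \<Rightarrow> real" where
  "averaging t = (\<lambda>\<omega>. indicator {1} (X (Coin t) \<omega>))"

definition gain :: "nat \<Rightarrow> nat \<Rightarrow> 'a \<Rightarrow> real" where
  "gain t i = (\<lambda>\<omega>. 1 - \<alpha> * c + \<alpha> * X (Bn i t) \<omega>)"

definition sgd_update :: "nat \<Rightarrow> nat \<Rightarrow> 'a \<Rightarrow> real" where
  "sgd_update t i = (\<lambda>\<omega>. gain t i \<omega> * model t i \<omega> + \<alpha> * X (Hn i t) \<omega>)"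

lemma model_0: "model 0 i = (\<lambda>_. w0)"
  by (simp add: model_def)

lemma model_Suc:
  "model (Suc t) = (\<lambda>i \<omega>. averaging t \<omega> * average t \<omega> + (1 - averaging t \<omega>) * sgd_update t i \<omega>)"
proof (intro ext)
  show "model (Suc t) i \<omega> = averaging t \<omega> * average t \<omega> + (1 - averaging t \<omega>) * sgd_update t i \<omega>" for i \<omega>
    unfolding model_def average_def averaging_def sgd_update_def gain_def
    by (cases "X (Coin t) \<omega> = 1") (simp_all add: Let_def algebra_simps)
qed

lemma depends_on_average:
  "(\<And>i. i < M \<Longrightarrow> depends_on P X K (model t i)) \<Longrightarrow> depends_on P X K (average t)"
  unfolding average_def
  by (intro depends_on_compose[where f="\<lambda>x. x / real M"] depends_on_sum) auto

lemma depends_on_averaging: "depends_on P X {Coin t} (averaging t)"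
  unfolding averaging_def
  by (intro depends_on_compose[where f="indicator {1}"] depends_on_component) auto

lemma depends_on_gain: "i < M \<Longrightarrow> depends_on P X (noise M t) (gain t i)"
  unfolding gain_def
  by (intro depends_on_add depends_on_mult depends_on_const depends_on_component) (auto simp: noise_def)

lemma depends_on_Hn: "i < M \<Longrightarrow> depends_on P X (noise M t) (X (Hn i t))"
  by (intro depends_on_component) (auto simp: noise_def)

lemma depends_on_sgd_update:
  assumes "\<And>j. j < M \<Longrightarrow> depends_on P X (past M t) (model t j)" and "i < M"
  shows "depends_on P X (past M t \<union> noise M t) (sgd_update t i)"
proof -
  have "past M t \<subseteq> past M t \<union> noise M t" "noise M t \<subseteq> past M t \<union> noise M t"
    by auto
  then have "depends_on P X (past M t \<union> noise M t) (model t i)"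
    "depends_on P X (past M t \<union> noise M t) (gain t i)"
    "depends_on P X (past M t \<union> noise M t) (X (Hn i t))"
    using assms depends_on_gain depends_on_Hn by (auto intro: depends_on_mono)
  then show ?thesis
    unfolding sgd_update_def by (intro depends_on_add depends_on_mult depends_on_const)
qed

lemma depends_on_model: "i < M \<Longrightarrow> depends_on P X (past M t) (model t i)"
proof (induction t arbitrary: i)
  case 0
  then show ?case by (simp add: model_0 depends_on_const)
next
  case (Suc t)
  have "depends_on P X (past M (Suc t)) (average t)"
    "depends_on P X (past M (Suc t)) (averaging t)"
    "depends_on P X (past M (Suc t)) (sgd_update t i)"
    using Suc depends_on_average depends_on_averaging depends_on_sgd_update
    by (auto simp: past_Suc intro: depends_on_mono)
  then show ?case
    unfolding model_Suc
    by (intro depends_on_add depends_on_mult depends_on_diff depends_on_const)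
qed

lemma integral_mult_noise_past:
  assumes "depends_on P X (noise M t) g" "integrable P g" "depends_on P X (past M t) g'" "integrable P g'"
  shows "integrable P (\<lambda>\<omega>. g \<omega> * g' \<omega>) \<and> expectation (\<lambda>\<omega>. g \<omega> * g' \<omega>) = expectation g * expectation g'"
proof -
  have "noise M t \<inter> past M t = {}"
    using past_noise_disjoint by blast
  then show ?thesis
    using past_subset_sources noise_subset_sources assms
    by (intro depends_on_disjoint_integral_mult[OF indep]) auto
qed

lemma integral_mult_sources:
  assumes "s \<in> sources M" "s' \<in> sources M" "s \<noteq> s'" "integrable P (X s)" "integrable P (X s')"
  shows "integrable P (\<lambda>\<omega>. X s \<omega> * X s' \<omega>) \<and> expectation (\<lambda>\<omega>. X s \<omega> * X s' \<omega>) = expectation (X s) * expectation (X s')"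
  using assms by (intro depends_on_disjoint_integral_mult[OF indep, of "{s}" "{s'}"] depends_on_component) auto

lemma averaging_integral: "integrable P (averaging t) \<and> expectation (averaging t) = \<zeta>"
proof -
  have "X (Coin t) \<in> borel_measurable P"
    using indep unfolding indep_vars_def sources_def by auto
  then have "{\<omega> \<in> space P. X (Coin t) \<omega> = 1} \<in> sets P"
    by measurable
  moreover have "averaging t \<omega> = indicator {\<omega> \<in> space P. X (Coin t) \<omega> = 1} \<omega>" if "\<omega> \<in> space P" for \<omega>
    using that by (simp add: averaging_def indicator_def)
  ultimately show ?thesis
    using coin[of t]
    by (simp add: integrable_indicator_iff emeasure_eq_measure
        cong: Bochner_Integration.integrable_cong Bochner_Integration.integral_cong)
qed

lemma symmetric_moments_centered_sources:
  assumes "inj_on s {..<M}" "\<And>i. i < M \<Longrightarrow> s i \<in> sources M"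
    and "\<And>i. i < M \<Longrightarrow> integrable P (X (s i)) \<and> integrable P (\<lambda>\<omega>. (X (s i) \<omega>)\<^sup>2)
           \<and> expectation (X (s i)) = 0 \<and> var P (X (s i)) = v"
  shows "symmetric_moments P M (\<lambda>i. X (s i)) 0 v 0"
proof -
  have "integrable P (\<lambda>\<omega>. X (s i) \<omega> * X (s j) \<omega>) \<and>
      expectation (\<lambda>\<omega>. X (s i) \<omega> * X (s j) \<omega>) = (if i = j then v else 0)" if "i < M" "j < M" for i j
  proof (cases "i = j")
    case True
    have "integrable P (\<lambda>\<omega>. (X (s i) \<omega>)\<^sup>2)" "expectation (X (s i)) = 0" "var P (X (s i)) = v"
      using assms(3) that by auto
    with True show ?thesis
      by (simp add: var_def power2_eq_square)
  next
    case False
    then have "s i \<noteq> s j"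
      using assms(1) that by (auto dest: inj_onD)
    with False show ?thesis
      using assms that integral_mult_sources[of "s i" "s j"] by simp
  qed
  with assms(3) show ?thesis
    unfolding symmetric_moments_def by simp
qed

lemma symmetric_moments_gain:
  "symmetric_moments P M (gain t) (1 - \<alpha> * c) ((1 - \<alpha> * c)\<^sup>2 + \<alpha>\<^sup>2 * \<beta>\<^sup>2) ((1 - \<alpha> * c)\<^sup>2)"
proof -
  have B: "symmetric_moments P M (\<lambda>i. X (Bn i t)) 0 (\<beta>\<^sup>2) 0"
    using b by (intro symmetric_moments_centered_sources) (auto simp: inj_on_def sources_def)
  have "gain t i \<omega> * gain t j \<omega> = (1 - \<alpha> * c)\<^sup>2 + ((1 - \<alpha> * c) * \<alpha> * X (Bn j t) \<omega>
      + ((1 - \<alpha> * c) * \<alpha> * X (Bn i t) \<omega> + \<alpha>\<^sup>2 * (X (Bn i t) \<omega> * X (Bn j t) \<omega>)))" for i j \<omega>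
    by (simp add: gain_def power2_eq_square algebra_simps)
  with B show ?thesis
    unfolding symmetric_moments_def by (simp add: gain_def prob_space)
qed

lemma integral_gain_mult_Hn:
  assumes "i < M" "j < M"
  shows "integrable P (\<lambda>\<omega>. gain t i \<omega> * X (Hn j t) \<omega>) \<and> expectation (\<lambda>\<omega>. gain t i \<omega> * X (Hn j t) \<omega>) = 0"
proof -
  have "gain t i \<omega> * X (Hn j t) \<omega> = (1 - \<alpha> * c) * X (Hn j t) \<omega> + \<alpha> * (X (Bn i t) \<omega> * X (Hn j t) \<omega>)" for \<omega>
    by (simp add: gain_def algebra_simps)
  then show ?thesis
    using assms b h integral_mult_sources[of "Bn i t" "Hn j t"] by (simp add: sources_def)
qed

lemma symmetric_moments_sgd_update:
  assumes "symmetric_moments P M (model t) m A B"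
  shows "symmetric_moments P M (sgd_update t)
           ((1 - \<alpha> * c) * m) (((1 - \<alpha> * c)\<^sup>2 + \<alpha>\<^sup>2 * \<beta>\<^sup>2) * A + \<alpha>\<^sup>2 * \<sigma>\<^sup>2) ((1 - \<alpha> * c)\<^sup>2 * B)"
proof -
  have H: "symmetric_moments P M (\<lambda>i. X (Hn i t)) 0 (\<sigma>\<^sup>2) 0"
    using h by (intro symmetric_moments_centered_sources) (auto simp: inj_on_def sources_def)
  note G = symmetric_moments_gain[of t]
  have gain_model: "integrable P (\<lambda>\<omega>. gain t i \<omega> * model t i \<omega>)
      \<and> expectation (\<lambda>\<omega>. gain t i \<omega> * model t i \<omega>) = (1 - \<alpha> * c) * m" if "i < M" for i
    using G assms that depends_on_gain depends_on_model integral_mult_noise_past[of t "gain t i" "model t i"]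
    unfolding symmetric_moments_def by auto
  have "integrable P (sgd_update t i) \<and> expectation (sgd_update t i) = (1 - \<alpha> * c) * m" if "i < M" for i
    using gain_model[OF that] H that unfolding sgd_update_def symmetric_moments_def by auto
  moreover have "integrable P (\<lambda>\<omega>. sgd_update t i \<omega> * sgd_update t j \<omega>) \<and>
      expectation (\<lambda>\<omega>. sgd_update t i \<omega> * sgd_update t j \<omega>) =
        (if i = j then ((1 - \<alpha> * c)\<^sup>2 + \<alpha>\<^sup>2 * \<beta>\<^sup>2) * A + \<alpha>\<^sup>2 * \<sigma>\<^sup>2 else (1 - \<alpha> * c)\<^sup>2 * B)"
    if "i < M" "j < M" for i j
  proof -
    have "sgd_update t i \<omega> * sgd_update t j \<omega> =
        (gain t i \<omega> * gain t j \<omega>) * (model t i \<omega> * model t j \<omega>)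
        + \<alpha> * ((gain t i \<omega> * X (Hn j t) \<omega>) * model t i \<omega>)
        + \<alpha> * ((gain t j \<omega> * X (Hn i t) \<omega>) * model t j \<omega>)
        + \<alpha>\<^sup>2 * (X (Hn i t) \<omega> * X (Hn j t) \<omega>)" for \<omega>
      by (simp add: sgd_update_def power2_eq_square algebra_simps)
    moreover have "integrable P (\<lambda>\<omega>. (gain t i \<omega> * gain t j \<omega>) * (model t i \<omega> * model t j \<omega>)) \<and>
        expectation (\<lambda>\<omega>. (gain t i \<omega> * gain t j \<omega>) * (model t i \<omega> * model t j \<omega>)) =
        expectation (\<lambda>\<omega>. gain t i \<omega> * gain t j \<omega>) * expectation (\<lambda>\<omega>. model t i \<omega> * model t j \<omega>)"
      using G assms that
      by (intro integral_mult_noise_past[of t] depends_on_mult depends_on_gain depends_on_model)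
         (auto simp: symmetric_moments_def)
    moreover have "integrable P (\<lambda>\<omega>. (gain t k \<omega> * X (Hn l t) \<omega>) * model t k \<omega>) \<and>
        expectation (\<lambda>\<omega>. (gain t k \<omega> * X (Hn l t) \<omega>) * model t k \<omega>) = 0" if "k < M" "l < M" for k l
    proof -
      have "integrable P (\<lambda>\<omega>. (gain t k \<omega> * X (Hn l t) \<omega>) * model t k \<omega>) \<and>
          expectation (\<lambda>\<omega>. (gain t k \<omega> * X (Hn l t) \<omega>) * model t k \<omega>) =
          expectation (\<lambda>\<omega>. gain t k \<omega> * X (Hn l t) \<omega>) * expectation (model t k)"
        using integral_gain_mult_Hn[OF that, of t] assms that
        by (intro integral_mult_noise_past[of t] depends_on_mult depends_on_gain depends_on_Hn depends_on_model)
           (auto simp: symmetric_moments_def)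
      then show ?thesis
        using integral_gain_mult_Hn[OF that, of t] by simp
    qed
    ultimately show ?thesis
      using G H assms that unfolding symmetric_moments_def
      by (cases "i = j") (simp_all add: algebra_simps)
  qed
  ultimately show ?thesis
    unfolding symmetric_moments_def by blast
qed

lemma integral_averaging_mixture:
  assumes "depends_on P X (past M t \<union> noise M t) g" "integrable P g"
    and "depends_on P X (past M t \<union> noise M t) g'" "integrable P g'"
  shows "integrable P (\<lambda>\<omega>. averaging t \<omega> * g \<omega> + (1 - averaging t \<omega>) * g' \<omega>) \<and>
    expectation (\<lambda>\<omega>. averaging t \<omega> * g \<omega> + (1 - averaging t \<omega>) * g' \<omega>)
      = \<zeta> * expectation g + (1 - \<zeta>) * expectation g'"
proof -
  have mult: "integrable P (\<lambda>\<omega>. averaging t \<omega> * f \<omega>) \<and> expectation (\<lambda>\<omega>. averaging t \<omega> * f \<omega>) = \<zeta> * expectation f"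
    if "depends_on P X (past M t \<union> noise M t) f" "integrable P f" for f
  proof -
    have "{Coin t} \<subseteq> sources M" "past M t \<union> noise M t \<subseteq> sources M" "{Coin t} \<inter> (past M t \<union> noise M t) = {}"
      using past_subset_sources noise_subset_sources Coin_notin_past_noise by (auto simp: sources_def)
    then have "integrable P (\<lambda>\<omega>. averaging t \<omega> * f \<omega>) \<and>
        expectation (\<lambda>\<omega>. averaging t \<omega> * f \<omega>) = expectation (averaging t) * expectation f"
      using averaging_integral depends_on_averaging that
      by (intro depends_on_disjoint_integral_mult[OF indep, where K="{Coin t}" and L="past M t \<union> noise M t"]) auto
    then show ?thesis
      using averaging_integral by simp
  qed
  have "averaging t \<omega> * g \<omega> + (1 - averaging t \<omega>) * g' \<omega>
      = g' \<omega> + averaging t \<omega> * g \<omega> - averaging t \<omega> * g' \<omega>" for \<omega>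
    by (simp add: algebra_simps)
  with mult[OF assms(1,2)] mult[OF assms(3,4)] assms(4) show ?thesis
    by (simp add: algebra_simps)
qed

lemma symmetric_moments_averaging_mixture:
  assumes Y: "symmetric_moments P M Y m A B" and Z: "symmetric_moments P M Z m' A' B'"
    and "\<And>i. i < M \<Longrightarrow> depends_on P X (past M t \<union> noise M t) (Y i)"
    and "\<And>i. i < M \<Longrightarrow> depends_on P X (past M t \<union> noise M t) (Z i)"
  shows "symmetric_moments P M (\<lambda>i \<omega>. averaging t \<omega> * Y i \<omega> + (1 - averaging t \<omega>) * Z i \<omega>)
           (\<zeta> * m + (1 - \<zeta>) * m') (\<zeta> * A + (1 - \<zeta>) * A') (\<zeta> * B + (1 - \<zeta>) * B')"
proof -
  have "(averaging t \<omega> * Y i \<omega> + (1 - averaging t \<omega>) * Z i \<omega>) * (averaging t \<omega> * Y j \<omega> + (1 - averaging t \<omega>) * Z j \<omega>)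
      = averaging t \<omega> * (Y i \<omega> * Y j \<omega>) + (1 - averaging t \<omega>) * (Z i \<omega> * Z j \<omega>)" for i j \<omega>
    by (cases "X (Coin t) \<omega> = 1") (simp_all add: averaging_def)
  moreover have "depends_on P X (past M t \<union> noise M t) (\<lambda>\<omega>. Y i \<omega> * Y j \<omega>)"
    "depends_on P X (past M t \<union> noise M t) (\<lambda>\<omega>. Z i \<omega> * Z j \<omega>)" if "i < M" "j < M" for i j
    using assms(3,4) that by (simp_all add: depends_on_mult)
  ultimately show ?thesis
    using Y Z assms(3,4) integral_averaging_mixture unfolding symmetric_moments_def
    by (auto simp: if_distrib)
qed

fun second_moment :: "nat \<Rightarrow> real" and cross_moment :: "nat \<Rightarrow> real" where
  "second_moment 0 = w0\<^sup>2"
| "cross_moment 0 = w0\<^sup>2"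
| "second_moment (Suc t) = \<zeta> * ((second_moment t + (real M - 1) * cross_moment t) / real M)
     + (1 - \<zeta>) * (((1 - \<alpha> * c)\<^sup>2 + \<alpha>\<^sup>2 * \<beta>\<^sup>2) * second_moment t + \<alpha>\<^sup>2 * \<sigma>\<^sup>2)"
| "cross_moment (Suc t) = \<zeta> * ((second_moment t + (real M - 1) * cross_moment t) / real M)
     + (1 - \<zeta>) * ((1 - \<alpha> * c)\<^sup>2 * cross_moment t)"

lemma symmetric_moments_model:
  "symmetric_moments P M (model t) ((\<zeta> + (1 - \<zeta>) * (1 - \<alpha> * c)) ^ t * w0) (second_moment t) (cross_moment t)"
proof (induction t)
  case 0
  then show ?case
    by (simp add: symmetric_moments_def model_0 power2_eq_square prob_space)
next
  case (Suc t)
  let ?m = "(\<zeta> + (1 - \<zeta>) * (1 - \<alpha> * c)) ^ t * w0"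
  let ?S = "(second_moment t + (real M - 1) * cross_moment t) / real M"
  have "symmetric_moments P M (\<lambda>_. average t) ?m ?S ?S"
    using symmetric_moments_average[OF Suc] workers unfolding symmetric_moments_def average_def by simp
  moreover note symmetric_moments_sgd_update[OF Suc]
  moreover have "depends_on P X (past M t \<union> noise M t) (average t)"
    "depends_on P X (past M t \<union> noise M t) (sgd_update t i)" if "i < M" for i
    using depends_on_model that by (auto intro: depends_on_average depends_on_sgd_update depends_on_mono)
  ultimately have "symmetric_moments P M (model (Suc t))
      (\<zeta> * ?m + (1 - \<zeta>) * ((1 - \<alpha> * c) * ?m)) (second_moment (Suc t)) (cross_moment (Suc t))"
    unfolding model_Suc second_moment.simps cross_moment.simps
    by (rule symmetric_moments_averaging_mixture) auto
  moreover have "\<zeta> * ?m + (1 - \<zeta>) * ((1 - \<alpha> * c) * ?m) = (\<zeta> + (1 - \<zeta>) * (1 - \<alpha> * c)) ^ Suc t * w0"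
    by (simp add: algebra_simps)
  ultimately show ?case
    by simp
qed

lemma var_average:
  "var P (average t) = (second_moment t + (real M - 1) * cross_moment t) / real M
                        - ((\<zeta> + (1 - \<zeta>) * (1 - \<alpha> * c)) ^ t * w0)\<^sup>2"
  using symmetric_moments_average[OF symmetric_moments_model] workers
  by (simp add: var_eq_second_moment average_def)

end

theorem lemma1:
  fixes P :: "'a measure" and X :: "src \<Rightarrow> 'a \<Rightarrow> real"
    and c \<alpha> \<zeta> \<beta> \<sigma> w0 :: real and M :: nat
  assumes "prob_space P"
    and "c > 0" and "\<alpha> > 0" and "0 < \<zeta>" and "\<zeta> < 1" and "M \<ge> 1"
    and indep: "prob_space.indep_vars P (\<lambda>_. borel) X
            ({Coin t | t. True} \<union> {Bn i t | i t. i < M} \<union> {Hn i t | i t. i < M})"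
    and coin: "\<And>t. measure P {\<omega> \<in> space P. X (Coin t) \<omega> = 1} = \<zeta>"
    and b: "\<And>i t. i < M \<Longrightarrow> integrable P (X (Bn i t)) \<and> integrable P (\<lambda>\<omega>. (X (Bn i t) \<omega>)\<^sup>2)
              \<and> integral\<^sup>L P (X (Bn i t)) = 0 \<and> var P (X (Bn i t)) = \<beta>\<^sup>2"
    and h: "\<And>i t. i < M \<Longrightarrow> integrable P (X (Hn i t)) \<and> integrable P (\<lambda>\<omega>. (X (Hn i t) \<omega>)\<^sup>2)
              \<and> integral\<^sup>L P (X (Hn i t)) = 0 \<and> var P (X (Hn i t)) = \<sigma>\<^sup>2"
    and stable1: "\<alpha> * c < 2"
    and stable2: "denom M \<zeta> \<alpha> c \<beta> > 0"
  shows "(\<lambda>t. var P (\<lambda>\<omega>. (\<Sum>i<M. W M c \<alpha> w0 X \<omega> t i) / real M))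
           \<longlonglongrightarrow> \<alpha> * \<sigma>\<^sup>2 / real M * inverse (denom M \<zeta> \<alpha> c \<beta>)"
proof -
  interpret local_sgd P X c \<alpha> \<zeta> \<beta> \<sigma> w0 M
    using assms unfolding sources_def[symmetric] by (intro local_sgd.intro)
  define \<rho> where "\<rho> = \<zeta> + (1 - \<zeta>) * (1 - \<alpha> * c)"
  have "(\<lambda>t. (second_moment t + (real M - 1) * cross_moment t) / real M)
          \<longlonglongrightarrow> \<alpha> * \<sigma>\<^sup>2 / real M * inverse (denom M \<zeta> \<alpha> c \<beta>)"
    using assms by (intro average_second_moment_tendsto) simp_all
  moreover have "\<bar>\<rho>\<bar> < 1"
    unfolding \<rho>_def using assms by (intro abs_averaged_contraction_less_one) simp_all
  then have "(\<lambda>t. (\<rho> ^ t * w0)\<^sup>2) \<longlonglongrightarrow> 0"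
    by (auto intro!: tendsto_eq_intros LIMSEQ_power_zero)
  ultimately have "(\<lambda>t. var P (average t)) \<longlonglongrightarrow> \<alpha> * \<sigma>\<^sup>2 / real M * inverse (denom M \<zeta> \<alpha> c \<beta>) - 0"
    unfolding var_average \<rho>_def by (intro tendsto_diff)
  then show ?thesis
    by (simp add: average_def model_def)
qed

end
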